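(* Let $A$ be a complex affine Poisson algebra of Krull dimension $d$ on which the Poisson bracket is not identically zero. Then the intersection of all Poisson prime ideals of $A$ of height $\ge d-1$ is nonzero.
   Context: A Poisson algebra over $\mathbb C$ is a commutative $\mathbb C$-algebra with a $\mathbb C$-bilinear Lie bracket $\{-,-\}$ such that $\{-,x\}$ is a derivation for each $x$. Complex affine means finitely generated over $\mathbb C$ and an integral domain. A Poisson prime ideal is a prime ideal $P$ with $\{P,A\}\subseteq P$. *)

theory Defs
  imports Main "HOL-Library.Extended_Nat"
begin

text \<open>A complex algebra structure on a commutative ring 'a is given by a unital ring
  homomorphism from the complex numbers into 'a (the structure map).\<close>
definition cplx_alg_map :: "(complex \<Rightarrow> 'a::comm_ring_1) \<Rightarrow> bool" where
  "cplx_alg_map \<iota> \<longleftrightarrow> \<iota> 1 = 1 \<and> (\<forall>a b. \<iota> (a + b) = \<iota> a + \<iota> b) \<and> (\<forall>a b. \<iota> (a * b) = \<iota> a * \<iota> b)"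

inductive_set alg_gen :: "(complex \<Rightarrow> 'a::comm_ring_1) \<Rightarrow> 'a set \<Rightarrow> 'a set"
  for \<iota> :: "complex \<Rightarrow> 'a" and S :: "'a set" where
  scalar: "\<iota> c \<in> alg_gen \<iota> S"
| gen: "s \<in> S \<Longrightarrow> s \<in> alg_gen \<iota> S"
| add: "x \<in> alg_gen \<iota> S \<Longrightarrow> y \<in> alg_gen \<iota> S \<Longrightarrow> x + y \<in> alg_gen \<iota> S"
| mult: "x \<in> alg_gen \<iota> S \<Longrightarrow> y \<in> alg_gen \<iota> S \<Longrightarrow> x * y \<in> alg_gen \<iota> S"

text \<open>Complex affine: finitely generated complex algebra which is an integral domain
  (the domain property is imposed by the type class idom).\<close>
definition complex_affine :: "(complex \<Rightarrow> 'a::idom) \<Rightarrow> bool" where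
  "complex_affine \<iota> \<longleftrightarrow> cplx_alg_map \<iota> \<and> (\<exists>S. finite S \<and> alg_gen \<iota> S = UNIV)"

definition poisson_bracket :: "(complex \<Rightarrow> 'a::comm_ring_1) \<Rightarrow> ('a \<Rightarrow> 'a \<Rightarrow> 'a) \<Rightarrow> bool" where
  "poisson_bracket \<iota> br \<longleftrightarrow>
     (\<forall>x y z. br (x + y) z = br x z + br y z) \<and>
     (\<forall>x y z. br x (y + z) = br x y + br x z) \<and>
     (\<forall>c x y. br (\<iota> c * x) y = \<iota> c * br x y) \<and>
     (\<forall>c x y. br x (\<iota> c * y) = \<iota> c * br x y) \<and>
     (\<forall>x. br x x = 0) \<and>
     (\<forall>x y. br x y = - br y x) \<and>
     (\<forall>x y z. br x (br y z) + br y (br z x) + br z (br x y) = 0) \<and>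
     (\<forall>x y z. br (x * y) z = x * br y z + y * br x z)"

definition is_ideal :: "'a::comm_ring_1 set \<Rightarrow> bool" where
  "is_ideal I \<longleftrightarrow> 0 \<in> I \<and> (\<forall>x\<in>I. \<forall>y\<in>I. x + y \<in> I) \<and> (\<forall>r. \<forall>x\<in>I. r * x \<in> I)"

definition prime_ideal :: "'a::comm_ring_1 set \<Rightarrow> bool" where
  "prime_ideal P \<longleftrightarrow> is_ideal P \<and> P \<noteq> UNIV \<and> (\<forall>a b. a * b \<in> P \<longrightarrow> a \<in> P \<or> b \<in> P)"

definition poisson_prime :: "('a::comm_ring_1 \<Rightarrow> 'a \<Rightarrow> 'a) \<Rightarrow> 'a set \<Rightarrow> bool" where
  "poisson_prime br P \<longleftrightarrow> prime_ideal P \<and> (\<forall>a\<in>P. \<forall>b. br a b \<in> P)"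

definition prime_chain :: "(nat \<Rightarrow> 'a::comm_ring_1 set) \<Rightarrow> nat \<Rightarrow> bool" where
  "prime_chain f n \<longleftrightarrow> (\<forall>i\<le>n. prime_ideal (f i)) \<and> (\<forall>i<n. f i \<subset> f (Suc i))"

definition height :: "'a::comm_ring_1 set \<Rightarrow> enat" where
  "height P = Sup {enat n | n. \<exists>f. prime_chain f n \<and> f n = P}"

definition krull_dim :: "'a::comm_ring_1 itself \<Rightarrow> enat" where
  "krull_dim _ = Sup {enat n | n. \<exists>f::nat \<Rightarrow> 'a set. prime_chain f n}"

end

theory Submission
  imports Defs "HOL-Computational_Algebra.Fundamental_Theorem_Algebra"
    "HOL-Analysis.Continuum_Not_Denumerable"
begin

text \<open>Suppose \<open>{x, y} \<noteq> 0\<close> and let \<open>P\<close> be a Poisson prime not containing \<open>{x, y}\<close>. Since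
  \<open>{x, -}\<close> and \<open>{-, y}\<close> are derivations preserving \<open>P\<close>, the images of \<open>x\<close> and \<open>y\<close> in \<open>A/P\<close> are
  algebraically independent. As \<open>A\<close> has countable dimension over the uncountable field \<open>\<complex>\<close>,
  some \<open>x - c\<close> together with \<open>P\<close> generates an ideal meeting \<open>\<complex>[y]\<close> only in \<open>0\<close>. A prime
  \<open>P\<^sub>1\<close> over this ideal avoiding \<open>\<complex>[y] - {0}\<close>, followed by a maximal ideal \<open>M \<supseteq> P\<^sub>1\<close>, which
  contains some \<open>y - r\<close> by the Nullstellensatz, gives a chain \<open>P \<subset> P\<^sub>1 \<subset> M\<close>. So \<open>P\<close> has height
  at most \<open>d - 2\<close>, and \<open>{x, y}\<close> lies in every Poisson prime of height at least \<open>d - 1\<close>.\<close>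

section \<open>Ring homomorphisms and polynomial evaluation\<close>

definition is_ring_hom :: "('b::comm_ring_1 \<Rightarrow> 'a::comm_ring_1) \<Rightarrow> bool" where
  "is_ring_hom h \<longleftrightarrow> h 1 = 1 \<and> (\<forall>a b. h (a + b) = h a + h b) \<and> (\<forall>a b. h (a * b) = h a * h b)"

lemma cplx_alg_map_iff_is_ring_hom: "cplx_alg_map \<iota> \<longleftrightarrow> is_ring_hom \<iota>"
  unfolding cplx_alg_map_def is_ring_hom_def ..

context
  fixes h :: "'b::comm_ring_1 \<Rightarrow> 'a::comm_ring_1"
  assumes hom: "is_ring_hom h"
begin

lemma hom_1 [simp]: "h 1 = 1"
  and hom_add: "h (a + b) = h a + h b"
  and hom_mult: "h (a * b) = h a * h b"
  using hom by (simp_all add: is_ring_hom_def)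

lemma hom_0 [simp]: "h 0 = 0"
  using hom_add[of 0 0] by simp

lemma hom_uminus: "h (- a) = - h a"
  using hom_add[of a "- a"] by (simp add: add.commute eq_neg_iff_add_eq_0)

lemma hom_of_nat: "h (of_nat n) = of_nat n"
  by (induction n) (simp_all add: hom_add)

lemma hom_sum: "h (\<Sum>i\<in>A. f i) = (\<Sum>i\<in>A. h (f i))"
  by (induction A rule: infinite_finite_induct) (simp_all add: hom_add)

lemma hom_prod: "h (\<Prod>i\<in>A. f i) = (\<Prod>i\<in>A. h (f i))"
  by (induction A rule: infinite_finite_induct) (simp_all add: hom_mult)

lemma poly_map_poly_pCons: "poly (map_poly h (pCons a p)) t = h a + t * poly (map_poly h p) t"
  by (simp add: map_poly_pCons)

lemma map_poly_hom_add: "map_poly h (p + q) = map_poly h p + map_poly h q"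
  by (intro poly_eqI) (simp add: coeff_map_poly hom_add)

lemma is_ring_hom_poly_eval: "is_ring_hom (\<lambda>p. poly (map_poly h p) t)"
  unfolding is_ring_hom_def
proof (intro conjI allI)
  show "poly (map_poly h (p * q)) t = poly (map_poly h p) t * poly (map_poly h q) t" for p q
  proof (induction p)
    case (pCons a p)
    have "map_poly h (smult a q) = smult (h a) (map_poly h q)"
      by (rule map_poly_smult) (simp_all add: hom_mult)
    with pCons show ?case
      by (simp add: map_poly_hom_add poly_map_poly_pCons algebra_simps)
  qed simp
qed (simp_all add: map_poly_hom_add)

end

lemma pderiv_map_poly_hom:
  fixes h :: "'b::idom \<Rightarrow> 'a::idom"
  assumes "is_ring_hom h"
  shows "pderiv (map_poly h p) = map_poly h (pderiv p)"
  by (intro poly_eqI)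
    (simp add: coeff_pderiv coeff_map_poly hom_0[OF assms] hom_mult[OF assms] hom_of_nat[OF assms] del: of_nat_Suc)

lemma poly_linear_factor_nonzero:
  fixes e :: "'c \<Rightarrow> 'b::idom"
  assumes "finite L" "k \<in> L" "c k \<noteq> 0" "inj_on e L"
  shows "(\<Sum>l\<in>L. [:c l:] * (\<Prod>m\<in>L-{l}. [:- e m, 1:])) \<noteq> 0"
proof
  assume zero: "(\<Sum>l\<in>L. [:c l:] * (\<Prod>m\<in>L-{l}. [:- e m, 1:])) = 0"
  have "poly (\<Sum>l\<in>L. [:c l:] * (\<Prod>m\<in>L-{l}. [:- e m, 1:])) (e k)
      = c k * (\<Prod>m\<in>L-{k}. e k - e m) + (\<Sum>l\<in>L-{k}. c l * (\<Prod>m\<in>L-{l}. e k - e m))"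
    using assms by (simp add: poly_sum poly_prod sum.remove)
  also have "(\<Sum>l\<in>L-{k}. c l * (\<Prod>m\<in>L-{l}. e k - e m)) = 0"
    using assms by (intro sum.neutral ballI) (auto simp: prod_zero_iff)
  finally have "c k * (\<Prod>m\<in>L-{k}. e k - e m) = 0"
    using zero by simp
  then show False
    using assms by (auto simp: prod_zero_iff inj_on_def)
qed

section \<open>Derivations\<close>

definition is_derivation :: "('a::comm_ring_1 \<Rightarrow> 'a) \<Rightarrow> bool" where
  "is_derivation D \<longleftrightarrow> (\<forall>a b. D (a + b) = D a + D b) \<and> (\<forall>a b. D (a * b) = a * D b + b * D a)"

lemma derivation_0: "is_derivation D \<Longrightarrow> D 0 = 0"
  unfolding is_derivation_def by (metis add.right_neutral add_left_cancel)

lemma derivation_poly: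
  assumes "is_derivation D"
  shows "D (poly p t) = poly (map_poly D p) t + poly (pderiv p) t * D t"
proof (induction p)
  case (pCons a p)
  have "D (poly (pCons a p) t) = D a + (t * D (poly p t) + poly p t * D t)"
    using assms by (simp add: is_derivation_def)
  with pCons show ?case
    by (simp add: map_poly_pCons derivation_0[OF assms] pderiv_pCons algebra_simps)
qed (simp add: derivation_0[OF assms])

lemma derivation_poly_map_poly_hom:
  fixes h :: "'b::idom \<Rightarrow> 'a::idom"
  assumes D: "is_derivation D" and h: "is_ring_hom h" and const: "\<And>c. D (h c) = 0"
  shows "D (poly (map_poly h p) t) = poly (map_poly h (pderiv p)) t * D t"
proof -
  have "map_poly D (map_poly h p) = 0"
    by (intro poly_eqI) (simp add: coeff_map_poly const derivation_0[OF D] hom_0[OF h])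
  then show ?thesis
    using derivation_poly[OF D, of "map_poly h p" t] by (simp add: pderiv_map_poly_hom[OF h])
qed

section \<open>Ideals\<close>

context
  fixes I :: "'a::comm_ring_1 set"
  assumes I: "is_ideal I"
begin

lemma ideal_0: "0 \<in> I"
  and ideal_add: "x \<in> I \<Longrightarrow> y \<in> I \<Longrightarrow> x + y \<in> I"
  and ideal_mult_left: "x \<in> I \<Longrightarrow> r * x \<in> I"
  using I unfolding is_ideal_def by blast+

lemma ideal_mult_right: "x \<in> I \<Longrightarrow> x * r \<in> I"
  using ideal_mult_left by (metis mult.commute)

lemma ideal_uminus: "x \<in> I \<Longrightarrow> - x \<in> I"
  using ideal_mult_left[of x "- 1"] by simp

lemma ideal_sum: "(\<And>i. i \<in> A \<Longrightarrow> f i \<in> I) \<Longrightarrow> (\<Sum>i\<in>A. f i) \<in> I"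
  by (induction A rule: infinite_finite_induct) (auto simp: ideal_0 ideal_add)

lemma ideal_eq_UNIV_iff: "I = UNIV \<longleftrightarrow> 1 \<in> I"
  using ideal_mult_right[of 1] by auto

end

definition ideal_adjoin :: "'a::comm_ring_1 set \<Rightarrow> 'a \<Rightarrow> 'a set" where
  "ideal_adjoin I a = {p + a * r | p r. p \<in> I}"

context
  fixes I :: "'a::comm_ring_1 set"
  assumes I: "is_ideal I"
begin

lemma is_ideal_adjoin: "is_ideal (ideal_adjoin I a)"
  unfolding is_ideal_def ideal_adjoin_def
proof (intro conjI ballI allI)
  show "0 \<in> {p + a * r | p r. p \<in> I}"
    by (intro CollectI exI[of _ 0] exI[of _ 0]) (simp add: ideal_0[OF I])
  fix x y assume "x \<in> {p + a * r | p r. p \<in> I}" "y \<in> {p + a * r | p r. p \<in> I}"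
  then obtain p q r s where "x = p + a * r" "y = q + a * s" "p \<in> I" "q \<in> I"
    by blast
  then have "x + y = (p + q) + a * (r + s)" "p + q \<in> I"
    by (simp_all add: ideal_add[OF I] algebra_simps)
  then show "x + y \<in> {p + a * r | p r. p \<in> I}"
    by blast
next
  fix z x assume "x \<in> {p + a * r | p r. p \<in> I}"
  then obtain p r where "x = p + a * r" "p \<in> I"
    by blast
  then have "z * x = z * p + a * (z * r)"
    by (simp add: algebra_simps)
  with ideal_mult_left[OF I \<open>p \<in> I\<close>] show "z * x \<in> {p + a * r | p r. p \<in> I}"
    by blast
qed

lemma subset_ideal_adjoin: "I \<subseteq> ideal_adjoin I a"
proof
  fix x assume "x \<in> I"
  then show "x \<in> ideal_adjoin I a"
    unfolding ideal_adjoin_def by (intro CollectI exI[of _ x] exI[of _ 0]) simp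
qed

lemma mem_ideal_adjoin: "a \<in> ideal_adjoin I a"
  unfolding ideal_adjoin_def by (intro CollectI exI[of _ 0] exI[of _ 1]) (simp add: ideal_0[OF I])

end

lemma maximal_avoiding_is_prime:
  fixes P S :: "'a::comm_ring_1 set"
  assumes P: "is_ideal P" "P \<inter> S = {}" and S: "1 \<in> S" "\<And>a b. a \<in> S \<Longrightarrow> b \<in> S \<Longrightarrow> a * b \<in> S"
    and max: "\<And>J. is_ideal J \<Longrightarrow> P \<subseteq> J \<Longrightarrow> J \<inter> S = {} \<Longrightarrow> J = P"
  shows "prime_ideal P"
  unfolding prime_ideal_def
proof (intro conjI allI impI)
  show "is_ideal P" "P \<noteq> UNIV"
    using P S by blast+
  have meets_S: "\<exists>p r. p \<in> P \<and> p + a * r \<in> S" if "a \<notin> P" for a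
  proof (rule ccontr)
    assume "\<not> ?thesis"
    then have "ideal_adjoin P a \<inter> S = {}"
      unfolding ideal_adjoin_def by blast
    then have "ideal_adjoin P a = P"
      by (rule max[OF is_ideal_adjoin[OF P(1)] subset_ideal_adjoin[OF P(1)]])
    then show False
      using mem_ideal_adjoin[OF P(1), of a] that by simp
  qed
  fix a b assume ab: "a * b \<in> P"
  show "a \<in> P \<or> b \<in> P"
  proof (rule ccontr)
    assume "\<not> (a \<in> P \<or> b \<in> P)"
    then obtain p r q s where pq: "p \<in> P" "q \<in> P" and in_S: "p + a * r \<in> S" "q + b * s \<in> S"
      using meets_S by meson
    have "(p + a * r) * (q + b * s) = p * (q + b * s) + q * (a * r) + (a * b) * (r * s)"
      by (simp add: algebra_simps)
    also have "\<dots> \<in> P"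
      by (rule ideal_add[OF P(1) ideal_add[OF P(1)]])
        (simp_all add: pq ab ideal_mult_right[OF P(1)])
    finally show False
      using S(2)[OF in_S] P(2) by blast
  qed
qed

lemma exists_prime_ideal_avoiding:
  fixes I S :: "'a::comm_ring_1 set"
  assumes I: "is_ideal I" "I \<inter> S = {}" and S: "1 \<in> S" "\<And>a b. a \<in> S \<Longrightarrow> b \<in> S \<Longrightarrow> a * b \<in> S"
  obtains P where "prime_ideal P" "I \<subseteq> P" "P \<inter> S = {}"
    "\<And>J. is_ideal J \<Longrightarrow> P \<subseteq> J \<Longrightarrow> J \<inter> S = {} \<Longrightarrow> J = P"
proof -
  define A where "A = {J. is_ideal J \<and> I \<subseteq> J \<and> J \<inter> S = {}}"
  have "\<exists>P\<in>A. \<forall>J\<in>A. P \<subseteq> J \<longrightarrow> J = P"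
  proof (rule subset_Zorn_nonempty)
    show "A \<noteq> {}"
      using I unfolding A_def by blast
    fix C assume C: "C \<noteq> {}" "subset.chain A C"
    then have chain: "\<And>J K. J \<in> C \<Longrightarrow> K \<in> C \<Longrightarrow> J \<subseteq> K \<or> K \<subseteq> J"
      and "C \<subseteq> A"
      unfolding subset.chain_def by auto
    then have CA: "\<And>J. J \<in> C \<Longrightarrow> is_ideal J \<and> I \<subseteq> J \<and> J \<inter> S = {}"
      unfolding A_def by auto
    have "is_ideal (\<Union>C)"
      unfolding is_ideal_def
    proof (intro conjI ballI allI)
      show "0 \<in> \<Union>C"
        using C(1) CA ideal_0 by blast
      fix x y assume "x \<in> \<Union>C" "y \<in> \<Union>C"
      then obtain J K where "J \<in> C" "K \<in> C" "x \<in> J" "y \<in> K"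
        by blast
      then show "x + y \<in> \<Union>C"
        using chain[of J K] CA ideal_add by blast
    next
      fix r x assume "x \<in> \<Union>C"
      then show "r * x \<in> \<Union>C"
        using CA ideal_mult_left by blast
    qed
    then show "\<Union>C \<in> A"
      using C(1) CA unfolding A_def by blast
  qed
  then obtain P where "P \<in> A" and max: "\<And>J. J \<in> A \<Longrightarrow> P \<subseteq> J \<Longrightarrow> J = P"
    by blast
  then have P: "is_ideal P" "I \<subseteq> P" "P \<inter> S = {}"
    unfolding A_def by auto
  have max': "J = P" if "is_ideal J" "P \<subseteq> J" "J \<inter> S = {}" for J
    using max[of J] that P(2) unfolding A_def by blast
  from maximal_avoiding_is_prime[OF P(1,3) S max'] P(2,3) max' show thesis
    by (rule that)
qed

definition maximal_ideal :: "'a::comm_ring_1 set \<Rightarrow> bool" where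
  "maximal_ideal M \<longleftrightarrow> is_ideal M \<and> 1 \<notin> M \<and> (\<forall>J. is_ideal J \<and> M \<subseteq> J \<and> 1 \<notin> J \<longrightarrow> J = M)"

lemma exists_maximal_ideal:
  fixes I :: "'a::comm_ring_1 set"
  assumes "is_ideal I" "1 \<notin> I"
  obtains M where "prime_ideal M" "maximal_ideal M" "I \<subseteq> M"
proof (rule exists_prime_ideal_avoiding[of I "{1}"])
  show "is_ideal I" "I \<inter> {1} = {}" "1 \<in> {1}"
    using assms by auto
  show "a * b \<in> {1}" if "a \<in> {1}" "b \<in> {1}" for a b :: 'a
    using that by simp
  fix M assume M: "prime_ideal M" "I \<subseteq> M" "M \<inter> {1} = {}"
    and max: "\<And>J. is_ideal J \<Longrightarrow> M \<subseteq> J \<Longrightarrow> J \<inter> {1} = {} \<Longrightarrow> J = M"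
  have "maximal_ideal M"
    unfolding maximal_ideal_def
  proof (intro conjI allI impI)
    show "is_ideal M" "1 \<notin> M"
      using M(1,3) unfolding prime_ideal_def by blast+
    fix J assume "is_ideal J \<and> M \<subseteq> J \<and> 1 \<notin> J"
    then show "J = M"
      using max by blast
  qed
  with M that show thesis
    by blast
qed

lemma maximal_ideal_inverse_mod:
  assumes M: "maximal_ideal M" and "a \<notin> M"
  obtains u where "1 - a * u \<in> M"
proof -
  have Mi: "is_ideal M" and max: "\<And>J. is_ideal J \<Longrightarrow> M \<subseteq> J \<Longrightarrow> 1 \<notin> J \<Longrightarrow> J = M"
    using M unfolding maximal_ideal_def by blast+
  have "1 \<in> ideal_adjoin M a"
  proof (rule ccontr)
    assume "1 \<notin> ideal_adjoin M a"
    then have "ideal_adjoin M a = M"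
      by (rule max[OF is_ideal_adjoin[OF Mi] subset_ideal_adjoin[OF Mi]])
    then show False
      using mem_ideal_adjoin[OF Mi, of a] \<open>a \<notin> M\<close> by simp
  qed
  then obtain p u where "p \<in> M" "1 = p + a * u"
    unfolding ideal_adjoin_def by blast
  with that show thesis
    by (metis add_diff_cancel_right')
qed

text \<open>Lagrange interpolation run backwards: multiply the relation among the cofactors by
  \<open>\<Prod>m\<in>L. x - e m\<close> and reduce modulo \<open>I\<close>.\<close>

lemma lagrange_combination_mem:
  fixes x :: "'a::comm_ring_1"
  assumes I: "is_ideal I" and L: "finite L"
    and cofactor: "\<And>l. l \<in> L \<Longrightarrow> (x - e l) * b l - g l \<in> I"
    and rel: "(\<Sum>l\<in>L. w l * b l) = 0"
  shows "(\<Sum>l\<in>L. w l * g l * (\<Prod>m\<in>L-{l}. x - e m)) \<in> I"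
proof -
  define Q where "Q l = (\<Prod>m\<in>L-{l}. x - e m)" for l
  have summand: "w l * g l * Q l = (\<Prod>m\<in>L. x - e m) * (w l * b l) - w l * Q l * ((x - e l) * b l - g l)"
    if "l \<in> L" for l
  proof -
    have "(\<Prod>m\<in>L. x - e m) = Q l * (x - e l)"
      using prod.remove[OF L that, of "\<lambda>m. x - e m"] unfolding Q_def by (simp add: mult.commute)
    then show ?thesis
      by (simp only:) (simp add: algebra_simps)
  qed
  have "(\<Sum>l\<in>L. w l * g l * Q l)
      = (\<Sum>l\<in>L. (\<Prod>m\<in>L. x - e m) * (w l * b l) - w l * Q l * ((x - e l) * b l - g l))"
    by (rule sum.cong) (simp_all add: summand)
  also have "\<dots> = (\<Prod>m\<in>L. x - e m) * (\<Sum>l\<in>L. w l * b l) - (\<Sum>l\<in>L. w l * Q l * ((x - e l) * b l - g l))"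
    by (simp add: sum_subtractf sum_distrib_left)
  also have "\<dots> = - (\<Sum>l\<in>L. w l * Q l * ((x - e l) * b l - g l))"
    by (simp add: rel)
  also have "\<dots> \<in> I"
    using cofactor by (intro ideal_uminus[OF I] ideal_sum[OF I] ideal_mult_left[OF I])
  finally show ?thesis
    unfolding Q_def .
qed

section \<open>Chains of prime ideals\<close>

lemma prime_chain_extend2:
  assumes f: "prime_chain f n" and "f n \<subset> P" "P \<subset> Q" "prime_ideal P" "prime_ideal Q"
  shows "prime_chain (f(Suc n := P, Suc (Suc n) := Q)) (Suc (Suc n))"
  unfolding prime_chain_def
proof (intro conjI allI impI)
  fix i assume "i \<le> Suc (Suc n)"
  then show "prime_ideal ((f(Suc n := P, Suc (Suc n) := Q)) i)"
    using f assms(4,5) unfolding prime_chain_def by (auto simp: le_Suc_eq)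
next
  fix i assume "i < Suc (Suc n)"
  then consider "i < n" | "i = n" | "i = Suc n"
    by linarith
  then show "(f(Suc n := P, Suc (Suc n) := Q)) i \<subset> (f(Suc n := P, Suc (Suc n) := Q)) (Suc i)"
    using f assms(2,3) unfolding prime_chain_def by cases auto
qed

lemma height_add_2_le_krull_dim:
  fixes P0 :: "'a::comm_ring_1 set"
  assumes "prime_ideal P0" "prime_ideal P" "prime_ideal Q" "P0 \<subset> P" "P \<subset> Q"
  shows "height P0 + 2 \<le> krull_dim TYPE('a)"
proof -
  define H where "H = {enat n | n. \<exists>f. prime_chain f n \<and> f n = P0}"
  have "prime_chain (\<lambda>_. P0) 0"
    using assms(1) unfolding prime_chain_def by simp
  then have "H \<noteq> {}"
    unfolding H_def by blast
  have bound: "eSuc (eSuc h) \<le> krull_dim TYPE('a)" if h: "h \<in> H" for h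
  proof -
    obtain n f where "h = enat n" "prime_chain f n" "f n = P0"
      using h unfolding H_def by blast
    then have "prime_chain (f(Suc n := P, Suc (Suc n) := Q)) (Suc (Suc n))"
      using assms by (intro prime_chain_extend2) auto
    then have "enat (Suc (Suc n)) \<le> krull_dim TYPE('a)"
      unfolding krull_dim_def by (intro Sup_upper) blast
    with \<open>h = enat n\<close> show ?thesis
      by (simp add: eSuc_enat)
  qed
  have "height P0 + 2 = eSuc (eSuc (height P0))"
    by (simp add: eSuc_plus_1 add.assoc flip: one_add_one)
  also have "\<dots> = Sup (eSuc ` eSuc ` H)"
    using \<open>H \<noteq> {}\<close> unfolding height_def H_def[symmetric] by (simp add: eSuc_Sup)
  also have "\<dots> \<le> krull_dim TYPE('a)"
    using bound by (auto intro: Sup_least)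
  finally show ?thesis .
qed

section \<open>Complex algebras\<close>

locale cplx_algebra =
  fixes \<iota> :: "complex \<Rightarrow> 'a::idom"
  assumes structure_map: "cplx_alg_map \<iota>"
begin

lemma is_ring_hom_scalar: "is_ring_hom \<iota>"
  using structure_map by (simp add: cplx_alg_map_iff_is_ring_hom)

lemma scalar_0 [simp]: "\<iota> 0 = 0"
  and scalar_1 [simp]: "\<iota> 1 = 1"
  and scalar_uminus [simp]: "\<iota> (- c) = - \<iota> c"
  using is_ring_hom_scalar by (simp_all add: hom_uminus)

sublocale vs: vector_space "\<lambda>c x. \<iota> c * x"
  by unfold_locales
    (simp_all add: hom_add[OF is_ring_hom_scalar] hom_mult[OF is_ring_hom_scalar] algebra_simps)

lemma span_mult:
  assumes M: "\<And>a b. a \<in> M \<Longrightarrow> b \<in> M \<Longrightarrow> a * b \<in> M"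
    and a: "a \<in> vs.span M" and b: "b \<in> vs.span M"
  shows "a * b \<in> vs.span M"
proof -
  have left: "m * b \<in> vs.span M" if "m \<in> M" for m
    using b
  proof (induction rule: vs.span_induct_alt)
    case (step c z w)
    have "m * (\<iota> c * z + w) = \<iota> c * (m * z) + m * w"
      by (simp add: algebra_simps)
    then show ?case
      using step M[OF that] by (simp add: vs.span_add vs.span_scale vs.span_base)
  qed (simp add: vs.span_zero)
  show ?thesis
    using a
  proof (induction rule: vs.span_induct_alt)
    case (step c m w)
    have "(\<iota> c * m + w) * b = \<iota> c * (m * b) + w * b"
      by (simp add: algebra_simps)
    then show ?case
      using step left by (simp add: vs.span_add vs.span_scale)
  qed (simp add: vs.span_zero)
qed

lemma countable_independent:
  assumes M: "countable M" "vs.span M = UNIV" and B: "vs.independent B"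
  shows "countable B"
proof -
  have "B \<subseteq> (\<Union>F\<in>{F. finite F \<and> F \<subseteq> M}. B \<inter> vs.span F)"
  proof
    fix v assume "v \<in> B"
    obtain F r where F: "finite F" "F \<subseteq> M" and v: "v = (\<Sum>a\<in>F. \<iota> (r a) * a)"
      using M(2) unfolding vs.span_explicit by blast
    have "v \<in> B \<inter> vs.span F"
      unfolding v using \<open>v \<in> B\<close> v
      by (simp add: vs.span_sum vs.span_scale vs.span_base)
    with F show "v \<in> (\<Union>F\<in>{F. finite F \<and> F \<subseteq> M}. B \<inter> vs.span F)"
      by blast
  qed
  moreover have "countable (\<Union>F\<in>{F. finite F \<and> F \<subseteq> M}. B \<inter> vs.span F)"
  proof (rule countable_UN[OF countable_Collect_finite_subset[OF M(1)]])
    fix F assume "F \<in> {F. finite F \<and> F \<subseteq> M}"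
    moreover have "vs.independent (B \<inter> vs.span F)"
      by (rule vs.independent_mono[OF B]) blast
    ultimately have "finite (B \<inter> vs.span F)"
      using vs.independent_span_bound[of F "B \<inter> vs.span F"] by blast
    then show "countable (B \<inter> vs.span F)"
      by (rule countable_finite)
  qed
  ultimately show ?thesis
    by (rule countable_subset)
qed

definition aeval :: "'a \<Rightarrow> complex poly \<Rightarrow> 'a" where
  "aeval t q = poly (map_poly \<iota> q) t"

lemma is_ring_hom_aeval: "is_ring_hom (aeval t)"
  unfolding aeval_def by (rule is_ring_hom_poly_eval[OF is_ring_hom_scalar])

lemma aeval_const [simp]: "aeval t [:c:] = \<iota> c"
  by (simp add: aeval_def map_poly_pCons)

lemma aeval_linear: "aeval t [:- c, 1:] = t - \<iota> c"
  by (simp add: aeval_def map_poly_pCons)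

lemma one_in_aeval_nonzero: "1 \<in> aeval y ` {q. q \<noteq> 0}"
  using hom_1[OF is_ring_hom_aeval] by (intro image_eqI[of _ _ 1]) simp_all

lemma mult_in_aeval_nonzero:
  assumes "a \<in> aeval y ` {q. q \<noteq> 0}" "b \<in> aeval y ` {q. q \<noteq> 0}"
  shows "a * b \<in> aeval y ` {q. q \<noteq> 0}"
proof -
  obtain p q where "p \<noteq> 0" "q \<noteq> 0" "a = aeval y p" "b = aeval y q"
    using assms by blast
  then show ?thesis
    by (intro image_eqI[of _ _ "p * q"]) (simp_all add: hom_mult[OF is_ring_hom_aeval])
qed

lemma scalar_notin_prime_ideal:
  assumes Q: "prime_ideal Q" and "c \<noteq> 0"
  shows "\<iota> c \<notin> Q"
proof
  assume "\<iota> c \<in> Q"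
  then have "\<iota> c * \<iota> (inverse c) \<in> Q"
    using Q unfolding prime_ideal_def by (simp add: ideal_mult_right)
  then have "1 \<in> Q"
    using \<open>c \<noteq> 0\<close> by (simp flip: hom_mult[OF is_ring_hom_scalar])
  then show False
    using Q ideal_eq_UNIV_iff unfolding prime_ideal_def by blast
qed

text \<open>Over the algebraically closed field \<open>\<complex>\<close> a nonzero polynomial splits into linear factors,
  one of which must lie in the prime ideal.\<close>

lemma prime_ideal_contains_linear:
  assumes Q: "prime_ideal Q"
  shows "p \<noteq> 0 \<Longrightarrow> aeval t p \<in> Q \<Longrightarrow> \<exists>r. t - \<iota> r \<in> Q"
proof (induction "degree p" arbitrary: p rule: less_induct)
  case less
  show ?case
  proof (cases "degree p = 0")
    case True
    then have "p = [:coeff p 0:]" "coeff p 0 \<noteq> 0"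
      using less.prems(1) by (metis degree_0_id, metis degree_0_id pCons_0_0)
    then show ?thesis
      using less.prems(2) scalar_notin_prime_ideal[OF Q] by (metis aeval_const)
  next
    case False
    then have "\<not> constant (poly p)"
      by (simp add: constant_degree)
    then obtain z where "poly p z = 0"
      using fundamental_theorem_of_algebra by blast
    then obtain q where pq: "p = [:- z, 1:] * q"
      using poly_eq_0_iff_dvd by blast
    have "q \<noteq> 0"
      using less.prems(1) pq by auto
    have "(t - \<iota> z) * aeval t q \<in> Q"
      using less.prems(2) unfolding pq by (simp only: hom_mult[OF is_ring_hom_aeval] aeval_linear)
    then have "t - \<iota> z \<in> Q \<or> aeval t q \<in> Q"
      using Q unfolding prime_ideal_def by blast
    moreover have "degree p = degree [:- z, 1:] + degree q"
      unfolding pq by (rule degree_mult_eq) (simp_all add: \<open>q \<noteq> 0\<close>)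
    ultimately show ?thesis
      using less.hyps[of q] \<open>q \<noteq> 0\<close> by auto
  qed
qed

definition aeval2 :: "'a \<Rightarrow> 'a \<Rightarrow> complex poly poly \<Rightarrow> 'a" where
  "aeval2 x y F = poly (map_poly (aeval y) F) x"

lemma is_ring_hom_aeval2: "is_ring_hom (aeval2 x y)"
  unfolding aeval2_def by (rule is_ring_hom_poly_eval[OF is_ring_hom_aeval])

lemma aeval2_const [simp]: "aeval2 x y [:q:] = aeval y q"
  by (simp add: aeval2_def map_poly_pCons hom_0[OF is_ring_hom_aeval] hom_1[OF is_ring_hom_aeval])

lemma aeval2_linear: "aeval2 x y [:[:- c:], 1:] = x - \<iota> c"
  by (simp add: aeval2_def map_poly_pCons hom_0[OF is_ring_hom_aeval] hom_1[OF is_ring_hom_aeval])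

end

section \<open>Affine algebras: countable dimension and the Nullstellensatz\<close>

locale affine_algebra = cplx_algebra +
  fixes S :: "'a set"
  assumes finite_generators: "finite S" and generates: "alg_gen \<iota> S = UNIV"
begin

text \<open>The monomials in the generators span the algebra as a \<open>\<complex>\<close>-vector space.\<close>

lemma countable_spanning_set:
  obtains M where "countable M" "vs.span M = UNIV"
proof
  let ?M = "prod_list ` lists S"
  show "countable ?M"
    using finite_generators by (intro countable_image countable_lists countable_finite)
  have closed: "a * b \<in> ?M" if ab: "a \<in> ?M" "b \<in> ?M" for a b
  proof -
    obtain xs ys where "xs \<in> lists S" "ys \<in> lists S" "a = prod_list xs" "b = prod_list ys"
      using ab by blast
    then show ?thesis
      by (intro image_eqI[of _ _ "xs @ ys"]) auto
  qed
  have "1 \<in> ?M"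
    by (intro image_eqI[of _ _ "[]"]) auto
  have "x \<in> vs.span ?M" if "x \<in> alg_gen \<iota> S" for x
    using that
  proof induction
    case (scalar c)
    then show ?case
      using vs.span_scale[OF vs.span_base[OF \<open>1 \<in> ?M\<close>], of c] by simp
  next
    case (gen s)
    then have "prod_list [s] \<in> ?M"
      by (intro imageI) simp
    then show ?case
      by (simp add: vs.span_base)
  qed (simp_all add: vs.span_add span_mult[OF closed])
  then show "vs.span ?M = UNIV"
    using generates by auto
qed

text \<open>\<open>\<complex>\<close> is uncountable, whereas the algebra has countable dimension.\<close>

lemma complex_family_dependent:
  fixes f :: "complex \<Rightarrow> 'a"
  obtains L w where "finite L" "(\<Sum>l\<in>L. \<iota> (w l) * f l) = 0" "\<exists>l\<in>L. w l \<noteq> 0"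
proof (cases "inj f")
  case False
  then obtain l1 l2 where "l1 \<noteq> l2" "f l1 = f l2"
    unfolding inj_def by blast
  define w :: "complex \<Rightarrow> complex" where "w l = (if l = l1 then 1 else - 1)" for l
  have "(\<Sum>l\<in>{l1, l2}. \<iota> (w l) * f l) = f l1 - f l2"
    using \<open>l1 \<noteq> l2\<close> by (simp add: w_def)
  then have "(\<Sum>l\<in>{l1, l2}. \<iota> (w l) * f l) = 0"
    using \<open>f l1 = f l2\<close> by simp
  moreover have "w l1 \<noteq> 0"
    by (simp add: w_def)
  ultimately show thesis
    by (intro that[of "{l1, l2}" w]) auto
next
  case True
  have "\<not> countable (range f)"
    using countable_image_inj_on[of f UNIV] True uncountable_UNIV_complex by auto
  moreover obtain M where "countable M" "vs.span M = UNIV"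
    by (rule countable_spanning_set)
  ultimately have "vs.dependent (range f)"
    using countable_independent by blast
  then obtain T u where T: "finite T" "T \<subseteq> range f" "(\<Sum>v\<in>T. \<iota> (u v) * v) = 0" "\<exists>v\<in>T. u v \<noteq> 0"
    unfolding vs.dependent_explicit by blast
  have inj: "inj_on f (f -` T)"
    using True by (rule inj_on_subset) simp
  have image: "f ` (f -` T) = T"
    using T(2) by auto
  have "finite (f -` T)"
    using T(1) True by (simp add: finite_vimageI)
  moreover have "(\<Sum>l\<in>f -` T. \<iota> (u (f l)) * f l) = 0"
    using sum.reindex[OF inj, of "\<lambda>v. \<iota> (u v) * v"] T(3) unfolding image by simp
  moreover have "\<exists>l\<in>f -` T. u (f l) \<noteq> 0"
  proof -
    obtain v where "v \<in> T" "u v \<noteq> 0"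
      using T(4) by blast
    moreover obtain l where "v = f l"
      using \<open>v \<in> T\<close> T(2) by blast
    ultimately show ?thesis
      by auto
  qed
  ultimately show thesis
    by (rule that)
qed

text \<open>Nullstellensatz: if \<open>a - r\<close> were invertible modulo \<open>M\<close> for every \<open>r \<in> \<complex>\<close>, a linear relation
  among the inverses would produce a nonzero polynomial in \<open>a\<close> lying in \<open>M\<close>.\<close>

lemma maximal_ideal_residue_scalar:
  assumes M: "prime_ideal M" "maximal_ideal M"
  shows "\<exists>r. a - \<iota> r \<in> M"
proof (rule ccontr)
  assume none: "\<nexists>r. a - \<iota> r \<in> M"
  have Mi: "is_ideal M"
    using M(1) unfolding prime_ideal_def by blast
  have "\<exists>v. 1 - (a - \<iota> l) * v \<in> M" for l
    using maximal_ideal_inverse_mod[OF M(2)] none by blast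
  then obtain u where u: "\<And>l. 1 - (a - \<iota> l) * u l \<in> M"
    by metis
  obtain L w where L: "finite L" "(\<Sum>l\<in>L. \<iota> (w l) * u l) = 0" and "\<exists>l\<in>L. w l \<noteq> 0"
    by (rule complex_family_dependent)
  define p where "p = (\<Sum>l\<in>L. [:w l:] * (\<Prod>m\<in>L-{l}. [:- m, 1:]))"
  have "p \<noteq> 0"
    unfolding p_def using poly_linear_factor_nonzero[of L _ w id] L(1) \<open>\<exists>l\<in>L. w l \<noteq> 0\<close> by auto
  have "(\<Sum>l\<in>L. \<iota> (w l) * 1 * (\<Prod>m\<in>L-{l}. a - \<iota> m)) \<in> M"
  proof (rule lagrange_combination_mem[OF Mi L(1) _ L(2)])
    show "(a - \<iota> l) * u l - 1 \<in> M" for l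
      using ideal_uminus[OF Mi u[of l]] by simp
  qed
  moreover have "aeval a p = (\<Sum>l\<in>L. \<iota> (w l) * 1 * (\<Prod>m\<in>L-{l}. a - \<iota> m))"
    unfolding p_def
    by (simp only: hom_sum[OF is_ring_hom_aeval] hom_mult[OF is_ring_hom_aeval]
        hom_prod[OF is_ring_hom_aeval] aeval_const aeval_linear mult_1_right)
  ultimately have "aeval a p \<in> M"
    by simp
  then show False
    using prime_ideal_contains_linear[OF M(1) \<open>p \<noteq> 0\<close>] none by blast
qed

end

section \<open>Poisson brackets\<close>

lemma poisson_prime_is_ideal: "poisson_prime br P \<Longrightarrow> is_ideal P"
  and poisson_prime_prime_ideal: "poisson_prime br P \<Longrightarrow> prime_ideal P"
  and poisson_prime_bracket_left: "poisson_prime br P \<Longrightarrow> a \<in> P \<Longrightarrow> br a b \<in> P"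
  unfolding poisson_prime_def prime_ideal_def by blast+

locale poisson_algebra = cplx_algebra +
  fixes br :: "'a \<Rightarrow> 'a \<Rightarrow> 'a"
  assumes poisson: "poisson_bracket \<iota> br"
begin

lemma bracket_add_left: "br (a + b) c = br a c + br b c"
  using poisson unfolding poisson_bracket_def by metis

lemma bracket_add_right: "br a (b + c) = br a b + br a c"
  using poisson unfolding poisson_bracket_def by metis

lemma bracket_scalar_left: "br (\<iota> k * a) b = \<iota> k * br a b"
  using poisson unfolding poisson_bracket_def by metis

lemma bracket_self: "br a a = 0"
  using poisson unfolding poisson_bracket_def by metis

lemma bracket_antisym: "br a b = - br b a"
  using poisson unfolding poisson_bracket_def by metis

lemma bracket_mult_left: "br (a * b) c = a * br b c + b * br a c"
  using poisson unfolding poisson_bracket_def by metis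

lemma bracket_scalar_zero_left: "br (\<iota> c) z = 0"
proof -
  have "br 1 z = br 1 z + br 1 z"
    using bracket_mult_left[of 1 1 z] by simp
  then have "br 1 z = 0"
    by (metis add_cancel_right_right)
  then show ?thesis
    using bracket_scalar_left[of c 1 z] by simp
qed

lemma bracket_scalar_zero_right: "br z (\<iota> c) = 0"
  using bracket_antisym[of z "\<iota> c"] bracket_scalar_zero_left by simp

lemma is_derivation_bracket_left: "is_derivation (\<lambda>a. br a z)"
  unfolding is_derivation_def by (simp add: bracket_add_left bracket_mult_left)

lemma is_derivation_bracket_right: "is_derivation (br z)"
  unfolding is_derivation_def
  by (metis bracket_add_right bracket_antisym bracket_mult_left minus_add_distrib mult_minus_right)

lemma bracket_aeval_right: "br z (aeval y q) = aeval y (pderiv q) * br z y"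
  unfolding aeval_def
  by (rule derivation_poly_map_poly_hom[OF is_derivation_bracket_right is_ring_hom_scalar
        bracket_scalar_zero_right])

lemma bracket_aeval_left: "br (aeval y q) z = aeval y (pderiv q) * br y z"
  unfolding aeval_def
  by (rule derivation_poly_map_poly_hom[OF is_derivation_bracket_left is_ring_hom_scalar
        bracket_scalar_zero_left])

lemma bracket_aeval2_left: "br (aeval2 x y F) y = aeval2 x y (pderiv F) * br x y"
  unfolding aeval2_def
  by (rule derivation_poly_map_poly_hom[OF is_derivation_bracket_left is_ring_hom_aeval])
    (simp add: bracket_aeval_left bracket_self)

lemma poisson_prime_bracket_right: "poisson_prime br P \<Longrightarrow> a \<in> P \<Longrightarrow> br b a \<in> P"
  using poisson_prime_bracket_left[of br P a b] ideal_uminus[OF poisson_prime_is_ideal]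
  by (metis bracket_antisym)

context
  fixes P :: "'a set" and x y :: 'a
  assumes P: "poisson_prime br P" and bracket_notin: "br x y \<notin> P"
begin

lemma poisson_prime_cancel_bracket: "a * br x y \<in> P \<Longrightarrow> a \<in> P"
  using poisson_prime_prime_ideal[OF P] bracket_notin unfolding prime_ideal_def by blast

text \<open>The derivation \<open>{x, -}\<close> (resp. \<open>{-, y}\<close>) lowers the degree in \<open>y\<close> (resp. \<open>x\<close>) and
  multiplies by \<open>{x, y} \<notin> P\<close>.\<close>

lemma aeval_in_poisson_prime_imp_zero: "aeval y q \<in> P \<Longrightarrow> q = 0"
proof (induction "degree q" arbitrary: q rule: less_induct)
  case less
  show ?case
  proof (cases "degree q = 0")
    case True
    then have "q = [:coeff q 0:]"
      by (rule degree_0_id[symmetric])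
    then have "coeff q 0 = 0"
      using less.prems scalar_notin_prime_ideal[OF poisson_prime_prime_ideal[OF P]] by (metis aeval_const)
    with \<open>q = [:coeff q 0:]\<close> show ?thesis
      by simp
  next
    case False
    have "aeval y (pderiv q) * br x y \<in> P"
      using poisson_prime_bracket_right[OF P less.prems, of x] by (simp add: bracket_aeval_right)
    then have "pderiv q = 0"
      using less.hyps False by (simp add: degree_pderiv poisson_prime_cancel_bracket)
    with False show ?thesis
      by (simp add: pderiv_eq_0_iff)
  qed
qed

lemma aeval2_in_poisson_prime_imp_zero: "aeval2 x y F \<in> P \<Longrightarrow> F = 0"
proof (induction "degree F" arbitrary: F rule: less_induct)
  case less
  show ?case
  proof (cases "degree F = 0")
    case True
    then have "F = [:coeff F 0:]"
      by (rule degree_0_id[symmetric])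
    then have "coeff F 0 = 0"
      using less.prems aeval_in_poisson_prime_imp_zero by (metis aeval2_const)
    with \<open>F = [:coeff F 0:]\<close> show ?thesis
      by simp
  next
    case False
    have "aeval2 x y (pderiv F) * br x y \<in> P"
      using poisson_prime_bracket_left[OF P less.prems, of y] by (simp add: bracket_aeval2_left)
    then have "pderiv F = 0"
      using less.hyps False by (simp add: degree_pderiv poisson_prime_cancel_bracket)
    with False show ?thesis
      by (simp add: pderiv_eq_0_iff)
  qed
qed

end

end

section \<open>Poisson primes of large height\<close>

locale affine_poisson_algebra = affine_algebra + poisson_algebra
begin

text \<open>The same interpolation argument as in the Nullstellensatz, now applied to the cofactors of
  \<open>x - c\<close> modulo \<open>P\<close>, produces a nonzero polynomial in \<open>x\<close> and \<open>y\<close> vanishing modulo \<open>P\<close>.\<close>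

lemma exists_adjoin_avoiding:
  assumes P: "poisson_prime br P" and xy: "br x y \<notin> P"
  obtains c where "ideal_adjoin P (x - \<iota> c) \<inter> aeval y ` {q. q \<noteq> 0} = {}"
proof (rule ccontr)
  assume "\<not> thesis"
  have "\<exists>b g. g \<noteq> 0 \<and> (x - \<iota> c) * b - aeval y g \<in> P" for c
  proof -
    have "ideal_adjoin P (x - \<iota> c) \<inter> aeval y ` {q. q \<noteq> 0} \<noteq> {}"
      using that \<open>\<not> thesis\<close> by blast
    then obtain p b g where "p \<in> P" "g \<noteq> 0" and eq: "p + (x - \<iota> c) * b = aeval y g"
      unfolding ideal_adjoin_def by blast
    have "(x - \<iota> c) * b - aeval y g = - p"
      unfolding eq[symmetric] by simp
    then show ?thesis
      using \<open>g \<noteq> 0\<close> ideal_uminus[OF poisson_prime_is_ideal[OF P] \<open>p \<in> P\<close>] by metis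
  qed
  then obtain b g where g: "\<And>c. g c \<noteq> 0" and b: "\<And>c. (x - \<iota> c) * b c - aeval y (g c) \<in> P"
    by metis
  obtain L w where L: "finite L" "(\<Sum>l\<in>L. \<iota> (w l) * b l) = 0" and "\<exists>l\<in>L. w l \<noteq> 0"
    by (rule complex_family_dependent)
  then obtain k where "k \<in> L" "w k \<noteq> 0"
    by blast
  define F where "F = (\<Sum>l\<in>L. [:[:w l:] * g l:] * (\<Prod>m\<in>L-{l}. [:[:- m:], 1:]))"
  have "F \<noteq> 0"
    unfolding F_def
    using poly_linear_factor_nonzero[OF L(1) \<open>k \<in> L\<close>, of "\<lambda>l. [:w l:] * g l" "\<lambda>m. [:m:]"]
      \<open>w k \<noteq> 0\<close> g[of k] by (simp add: inj_on_def)
  have "(\<Sum>l\<in>L. \<iota> (w l) * aeval y (g l) * (\<Prod>m\<in>L-{l}. x - \<iota> m)) \<in> P"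
    by (rule lagrange_combination_mem[OF poisson_prime_is_ideal[OF P] L(1) b L(2)])
  moreover have "aeval2 x y F = (\<Sum>l\<in>L. \<iota> (w l) * aeval y (g l) * (\<Prod>m\<in>L-{l}. x - \<iota> m))"
    unfolding F_def
    by (simp only: hom_sum[OF is_ring_hom_aeval2] hom_mult[OF is_ring_hom_aeval2]
        hom_prod[OF is_ring_hom_aeval2] aeval2_const aeval2_linear hom_mult[OF is_ring_hom_aeval]
        aeval_const)
  ultimately show False
    using aeval2_in_poisson_prime_imp_zero[OF P xy] \<open>F \<noteq> 0\<close> by simp
qed

lemma bracket_mem_poisson_prime:
  assumes dim: "krull_dim TYPE('a) = enat d" and P: "poisson_prime br P"
    and height: "enat d \<le> height P + 1"
  shows "br x y \<in> P"
proof (rule ccontr)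
  assume xy: "br x y \<notin> P"
  note P_ideal = poisson_prime_is_ideal[OF P] and P_prime = poisson_prime_prime_ideal[OF P]
  obtain c where c: "ideal_adjoin P (x - \<iota> c) \<inter> aeval y ` {q. q \<noteq> 0} = {}"
    using exists_adjoin_avoiding[OF P xy] by blast
  obtain P1 where P1: "prime_ideal P1" "ideal_adjoin P (x - \<iota> c) \<subseteq> P1"
    "P1 \<inter> aeval y ` {q. q \<noteq> 0} = {}"
    by (rule exists_prime_ideal_avoiding[OF is_ideal_adjoin[OF P_ideal] c one_in_aeval_nonzero
        mult_in_aeval_nonzero]) blast
  have "x - \<iota> c \<notin> P"
    using aeval2_in_poisson_prime_imp_zero[OF P xy, of "[:[:- c:], 1:]"] by (auto simp: aeval2_linear)
  then have "P \<subset> P1"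
    using P1(2) subset_ideal_adjoin[OF P_ideal] mem_ideal_adjoin[OF P_ideal] by blast
  have "is_ideal P1" "1 \<notin> P1"
    using P1(1,3) one_in_aeval_nonzero unfolding prime_ideal_def by blast+
  then obtain M where M: "prime_ideal M" "maximal_ideal M" "P1 \<subseteq> M"
    by (rule exists_maximal_ideal)
  obtain r where "y - \<iota> r \<in> M"
    using maximal_ideal_residue_scalar[OF M(1,2)] by blast
  moreover have "y - \<iota> r \<in> aeval y ` {q. q \<noteq> 0}"
    by (intro image_eqI[of _ _ "[:- r, 1:]"]) (simp_all add: aeval_linear)
  then have "y - \<iota> r \<notin> P1"
    using P1(3) by blast
  ultimately have "P1 \<subset> M"
    using M(3) by blast
  then have "height P + 2 \<le> enat d"
    using height_add_2_le_krull_dim[OF P_prime P1(1) M(1) \<open>P \<subset> P1\<close>] dim by simp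
  with height show False
    by (cases "height P") (simp_all add: one_enat_def numeral_eq_enat)
qed

end

theorem lemma7p2:
  fixes \<iota> :: "complex \<Rightarrow> 'a::idom" and br :: "'a \<Rightarrow> 'a \<Rightarrow> 'a" and d :: nat
  assumes "complex_affine \<iota>"
    and "poisson_bracket \<iota> br"
    and "krull_dim TYPE('a) = enat d"
    and "\<exists>x y. br x y \<noteq> 0"
  shows "\<Inter> {P. poisson_prime br P \<and> enat d \<le> height P + 1} \<noteq> {0}"
proof -
  obtain S where "cplx_alg_map \<iota>" "finite S" "alg_gen \<iota> S = UNIV"
    using assms(1) unfolding complex_affine_def by blast
  with assms(2) interpret affine_poisson_algebra \<iota> S br
    by unfold_locales
  obtain x y where "br x y \<noteq> 0"
    using assms(4) by blast
  moreover have "br x y \<in> \<Inter> {P. poisson_prime br P \<and> enat d \<le> height P + 1}"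
    using bracket_mem_poisson_prime[OF assms(3)] by blast
  ultimately show ?thesis
    by blast
qed

end
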